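(* There is an algorithm that, given an integer $k\ge 1$ and a finite multiset $D$ of $n$ nonnegative integers, decides in $O(n\log n)$ time whether there exists a rooted $k$-ary tree whose multiset of node depths equals $D$.
   Context: A rooted $k$-ary tree is a rooted tree in which every node has at most $k$ children. The depth of a node is the number of edges on the path from it to the root; the multiset of depths has one entry per node. Running time is measured with arithmetic on the input integers taking unit time. *)

theory Defs
  imports Complex_Main "HOL-Library.Multiset"
begin

datatype tree = Node "tree list"

fun kary :: "nat \<Rightarrow> tree \<Rightarrow> bool" where
  "kary k (Node ts) = (length ts \<le> k \<and> (\<forall>t\<in>set ts. kary k t))"

fun depths :: "tree \<Rightarrow> nat multiset" where
  "depths (Node ts) = add_mset 0 (sum_list (map (\<lambda>t. image_mset Suc (depths t)) ts))"

datatype instr =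
    LoadConst nat int
  | Add nat nat nat
  | Sub nat nat nat
  | Mul nat nat nat
  | Load nat nat
  | Store nat nat
  | JumpLeq nat nat nat
  | Jump nat

type_synonym config = "nat \<times> (int \<Rightarrow> int)"

fun exec :: "instr \<Rightarrow> config \<Rightarrow> config" where
  "exec (LoadConst a c) (pc, m) = (Suc pc, m(int a := c))"
| "exec (Add a b c) (pc, m) = (Suc pc, m(int a := m (int b) + m (int c)))"
| "exec (Sub a b c) (pc, m) = (Suc pc, m(int a := m (int b) - m (int c)))"
| "exec (Mul a b c) (pc, m) = (Suc pc, m(int a := m (int b) * m (int c)))"
| "exec (Load a b) (pc, m) = (Suc pc, m(int a := m (m (int b))))"
| "exec (Store a b) (pc, m) = (Suc pc, m(m (int a) := m (int b)))"
| "exec (JumpLeq a b p) (pc, m) = (if m (int a) \<le> m (int b) then p else Suc pc, m)"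
| "exec (Jump p) (pc, m) = (p, m)"

definition halted :: "instr list \<Rightarrow> config \<Rightarrow> bool" where
  "halted P c \<longleftrightarrow> length P \<le> fst c"

definition step :: "instr list \<Rightarrow> config \<Rightarrow> config" where
  "step P c = (if halted P c then c else exec (P ! fst c) c)"

definition run :: "instr list \<Rightarrow> nat \<Rightarrow> config \<Rightarrow> config" where
  "run P t c = (step P ^^ t) c"

definition init :: "nat \<Rightarrow> nat list \<Rightarrow> config" where
  "init k ds = (0, \<lambda>a. if a = 0 then int k
                      else if a = 1 then int (length ds)
                      else if 2 \<le> a \<and> a < int (length ds) + 2 then int (ds ! nat (a - 2))
                      else 0)"

end

theory Submission
  imports Defs
begin

text \<open>A multiset M of depths is the depth multiset of a k-ary tree iff M contains 0 exactly once
  and every level d + 1 has at most k times as many elements as level d: the nodes of level d + 1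
  can then be distributed among the nodes of level d, at most k per parent. This condition leaves
  no gaps between depths, so all depths are below n = size M, and it can be checked on the
  histogram of the depths over [0, n). The RAM program builds this histogram in one pass and then
  checks the level inequalities, in time O(n). As the input occupies the cells 2, ..., n + 1 that
  the program needs as registers, it first moves the first six depths to negative addresses and
  scans the input in two pieces.\<close>

lemma count_sum_list: "count (sum_list Ms) x = (\<Sum>M\<leftarrow>Ms. count M x)"
  by (induction Ms) auto

lemma count_image_mset_Suc_Suc [simp]: "count (image_mset Suc M) (Suc d) = count M d"
  by (induction M) auto

lemma count_image_mset_Suc_0 [simp]: "count (image_mset Suc M) 0 = 0"
  by (induction M) auto

lemma count_depths_0 [simp]: "count (depths T) 0 = 1"
  by (cases T) (simp add: count_sum_list o_def)

lemma count_depths_Node_Suc: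
  "count (depths (Node ts)) (Suc d) = (\<Sum>t\<leftarrow>ts. count (depths t) d)"
  by (simp add: count_sum_list o_def)

definition kary_levels :: "nat \<Rightarrow> nat multiset \<Rightarrow> bool" where
  "kary_levels k M \<longleftrightarrow> (\<forall>d. count M (Suc d) \<le> k * count M d)"

lemma kary_levels_depths: "kary k T \<Longrightarrow> kary_levels k (depths T)"
  unfolding kary_levels_def
proof (induction T)
  case (Node ts)
  show ?case
  proof
    fix d
    show "count (depths (Node ts)) (Suc d) \<le> k * count (depths (Node ts)) d"
    proof (cases d)
      case 0
      then show ?thesis
        using Node.prems by (simp add: count_depths_Node_Suc sum_list_triv del: depths.simps)
    next
      case (Suc e)
      have "(\<Sum>t\<leftarrow>ts. count (depths t) (Suc e)) \<le> (\<Sum>t\<leftarrow>ts. k * count (depths t) e)"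
        using Node by (intro sum_list_mono) auto
      also have "\<dots> = k * (\<Sum>t\<leftarrow>ts. count (depths t) e)"
        by (simp add: sum_list_const_mult)
      finally show ?thesis
        using Suc by (simp only: count_depths_Node_Suc)
    qed
  qed
qed

lemma split_into_bounded_groups:
  "length xs \<le> k * r \<Longrightarrow> \<exists>gs. length gs = r \<and> concat gs = xs \<and> (\<forall>g\<in>set gs. length g \<le> k)"
proof (induction r arbitrary: xs)
  case (Suc r)
  then obtain gs where "length gs = r" "concat gs = drop k xs" "\<forall>g\<in>set gs. length g \<le> k"
    by (metis add_diff_cancel_left' diff_le_mono length_drop mult_Suc_right)
  then show ?case
    by (intro exI[of _ "take k xs # gs"]) auto
qed simp

definition forest_depths :: "tree list \<Rightarrow> nat multiset" where
  "forest_depths ts = (\<Sum>t\<leftarrow>ts. depths t)"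

lemma count_forest_depths_0: "count (forest_depths ts) 0 = length ts"
  by (induction ts) (auto simp: forest_depths_def)

lemma forest_depths_map_Node:
  "forest_depths (map Node gs) = replicate_mset (length gs) 0 + image_mset Suc (forest_depths (concat gs))"
proof (induction gs)
  case (Cons g gs)
  have "image_mset Suc (forest_depths g) = (\<Sum>t\<leftarrow>g. image_mset Suc (depths t))"
    by (induction g) (auto simp: forest_depths_def)
  then show ?case
    using Cons by (simp add: forest_depths_def o_def)
qed (simp add: forest_depths_def)

lemma mset_zeros_plus_image_Suc:
  "M = replicate_mset (count M 0) 0 + image_mset Suc (image_mset (\<lambda>x. x - 1) {#x \<in># M. 0 < x#})"
proof -
  have "image_mset Suc (image_mset (\<lambda>x. x - 1) {#x \<in># M. 0 < x#}) = {#x \<in># M. x \<noteq> 0#}"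
    by (induction M) auto
  moreover have "{#x \<in># M. x = 0#} = replicate_mset (count M 0) 0"
    by (rule filter_eq_replicate_mset)
  ultimately show ?thesis
    by (metis multiset_partition)
qed

lemma kary_forest_exists:
  "kary_levels k M \<Longrightarrow> \<exists>ts. (\<forall>t\<in>set ts. kary k t) \<and> forest_depths ts = M"
proof (induction "size M" arbitrary: M rule: less_induct)
  case less
  define M' where "M' = image_mset (\<lambda>x. x - 1) {#x \<in># M. 0 < x#}"
  have M_split: "M = replicate_mset (count M 0) 0 + image_mset Suc M'"
    unfolding M'_def by (rule mset_zeros_plus_image_Suc)
  have count_M': "count M' d = count M (Suc d)" for d
    using arg_cong[OF M_split, of "\<lambda>N. count N (Suc d)"] by simp
  show ?case
  proof (cases "count M 0 = 0")
    case True
    have "count M d = 0" for d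
      using less.prems True by (induction d) (metis kary_levels_def le_zero_eq mult_0_right)+
    then show ?thesis
      by (intro exI[of _ "[]"]) (simp add: forest_depths_def multiset_eq_iff)
  next
    case False
    have "size M' < size M"
      using False arg_cong[OF M_split, of size] by simp
    moreover have "kary_levels k M'"
      using less.prems by (simp add: kary_levels_def count_M')
    ultimately obtain fs where fs: "\<forall>t\<in>set fs. kary k t" "forest_depths fs = M'"
      using less.hyps by blast
    have "length fs \<le> k * count M 0"
      using less.prems count_forest_depths_0[of fs] fs(2) count_M'[of 0]
      by (metis kary_levels_def)
    then obtain gs where gs: "length gs = count M 0" "concat gs = fs" "\<forall>g\<in>set gs. length g \<le> k"
      using split_into_bounded_groups by blast
    have "forest_depths (map Node gs) = M"
      using forest_depths_map_Node[of gs] gs fs(2) M_split by simp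
    moreover have "\<forall>t\<in>set (map Node gs). kary k t"
      using gs fs(1) by auto
    ultimately show ?thesis by blast
  qed
qed

theorem kary_tree_depths_iff:
  "(\<exists>T. kary k T \<and> depths T = M) \<longleftrightarrow> count M 0 = 1 \<and> kary_levels k M"
proof
  assume "\<exists>T. kary k T \<and> depths T = M"
  then show "count M 0 = 1 \<and> kary_levels k M"
    using kary_levels_depths by auto
next
  assume M: "count M 0 = 1 \<and> kary_levels k M"
  then obtain ts where ts: "\<forall>t\<in>set ts. kary k t" "forest_depths ts = M"
    using kary_forest_exists by blast
  then obtain T where "ts = [T]"
    using M count_forest_depths_0[of ts] by (cases ts) auto
  then show "\<exists>T. kary k T \<and> depths T = M"
    using ts by (auto simp: forest_depths_def)
qed

lemma kary_levels_less_size: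
  assumes "kary_levels k M" "x \<in># M"
  shows "x < size M"
proof -
  have "y \<in># M" if "y \<le> x" for y
    using that
  proof (induction "x - y" arbitrary: y)
    case (Suc j)
    then have "0 < count M (Suc y)" by simp
    then show ?case
      using assms(1) by (metis kary_levels_def mult_0_right not_gr0 count_greater_zero_iff le_zero_eq)
  qed (use assms(2) in simp)
  then have "{0..x} \<subseteq> set_mset M" by auto
  then have "card {0..x} \<le> card (set_mset M)" by (intro card_mono) auto
  also have "\<dots> \<le> size M" by (induction M) (auto simp: card_insert_if)
  finally show ?thesis by simp
qed

lemma kary_levels_iff_bounded:
  "kary_levels k M \<longleftrightarrow> (\<forall>x\<in>#M. x < size M) \<and> (\<forall>d\<in>{1..<size M}. count M d \<le> k * count M (d - 1))"
proof
  assume levels: "kary_levels k M"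
  show "(\<forall>x\<in>#M. x < size M) \<and> (\<forall>d\<in>{1..<size M}. count M d \<le> k * count M (d - 1))"
  proof (intro conjI ballI)
    fix d :: nat
    assume "d \<in> {1..<size M}"
    then show "count M d \<le> k * count M (d - 1)"
      using levels[unfolded kary_levels_def, rule_format, of "d - 1"] by simp
  qed (use levels kary_levels_less_size in blast)
next
  assume bounded: "(\<forall>x\<in>#M. x < size M) \<and> (\<forall>d\<in>{1..<size M}. count M d \<le> k * count M (d - 1))"
  show "kary_levels k M"
    unfolding kary_levels_def
  proof
    fix d
    show "count M (Suc d) \<le> k * count M d"
    proof (cases "Suc d < size M")
      case False
      then have "count M (Suc d) = 0"
        using bounded by (meson count_eq_zero_iff not_le_imp_less not_less_iff_gr_or_eq)
      then show ?thesis by simp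
    qed (use bounded[THEN conjunct2, rule_format, of "Suc d"] in simp)
  qed
qed

theorem kary_tree_depths_iff_bounded:
  "(\<exists>T. kary k T \<and> depths T = M) \<longleftrightarrow>
     (\<forall>x\<in>#M. x < size M) \<and> count M 0 = 1 \<and> (\<forall>d\<in>{1..<size M}. count M d \<le> k * count M (d - 1))"
  using kary_tree_depths_iff kary_levels_iff_bounded by blast

lemma run_0 [simp]: "run P 0 c = c"
  by (simp add: run_def)

lemma run_Suc: "run P (Suc t) c = run P t (step P c)"
  by (simp only: run_def funpow_Suc_right o_apply)

lemma run_numeral: "run P (numeral t) c = run P (pred_numeral t) (step P c)"
  by (simp add: numeral_eq_Suc run_Suc)

lemma run_1: "run P 1 c = step P c"
  by (simp add: run_def)

lemma run_add: "run P (s + t) c = run P t (run P s c)"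
  by (simp only: run_def add.commute[of s t] funpow_add o_apply)

definition halts_with :: "instr list \<Rightarrow> config \<Rightarrow> nat \<Rightarrow> bool \<Rightarrow> bool" where
  "halts_with P c t b \<longleftrightarrow> halted P (run P t c) \<and> snd (run P t c) 0 = of_bool b"

lemma halts_with_run:
  "run P s c = c' \<Longrightarrow> halts_with P c' t b \<Longrightarrow> halts_with P c (s + t) b"
  by (simp add: halts_with_def run_add)

lemma halts_with_False: "halts_with P c t False \<Longrightarrow> \<not> b \<Longrightarrow> halts_with P c t b"
  by simp

definition Prog :: "instr list" where
  "Prog = [
    \<comment> \<open>0: cell 1 := n + k, cell 0 := q = k - 2(n + k), M[q] := n + k\<close>
    Add 1 1 0,
    Sub 0 0 1,
    Sub 0 0 1,
    Store 0 1,
    \<comment> \<open>4: save cells 2..7 (the first six depths) at q - 1, ..., q - 6\<close>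
    LoadConst 1 1,
    Sub 1 0 1,
    Store 1 2,
    LoadConst 1 2,
    Sub 1 0 1,
    Store 1 3,
    LoadConst 1 3,
    Sub 1 0 1,
    Store 1 4,
    LoadConst 1 4,
    Sub 1 0 1,
    Store 1 5,
    LoadConst 1 5,
    Sub 1 0 1,
    Store 1 6,
    LoadConst 1 6,
    Sub 1 0 1,
    Store 1 7,
    \<comment> \<open>22: recover n and k from M[q]; M[q - 8] := k, M[q - 7] := q - min n 6;
      cells 5, 6, 7 := 1, B, B + n with B = n + 8; cells 1, 2 := 8, n + 2\<close>
    Load 4 0,
    LoadConst 5 0,
    Sub 3 5 0,
    Sub 3 3 4,
    Sub 4 4 3,
    LoadConst 1 8,
    Sub 1 0 1,
    Store 1 4,
    LoadConst 4 6,
    JumpLeq 4 3 33,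
    Add 4 3 5,
    Sub 4 0 4,
    LoadConst 1 7,
    Sub 1 0 1,
    Store 1 4,
    LoadConst 5 1,
    LoadConst 6 8,
    Add 6 6 3,
    Add 7 6 3,
    LoadConst 1 8,
    LoadConst 2 2,
    Add 2 2 3,
    \<comment> \<open>44: for p from cell 1 to cell 2: reject if M[p] \<ge> n, else increment M[B + M[p]]\<close>
    JumpLeq 2 1 53,
    Load 3 1,
    Add 3 3 6,
    JumpLeq 7 3 80,
    Load 4 3,
    Add 4 4 5,
    Store 3 4,
    Add 1 1 5,
    Jump 44,
    \<comment> \<open>53: after the first pass (cell 2 > 1), run the loop again on the saved cells [q - min n 6, q)\<close>
    JumpLeq 2 5 60,
    LoadConst 1 7,
    Sub 1 0 1,
    Load 1 1,
    LoadConst 3 0,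
    Add 2 0 3,
    Jump 44,
    \<comment> \<open>60: cell 2 := k; reject unless M[B] = 1\<close>
    LoadConst 2 8,
    Sub 2 0 2,
    Load 2 2,
    Load 3 6,
    JumpLeq 3 5 66,
    Jump 80,
    JumpLeq 5 3 68,
    Jump 80,
    \<comment> \<open>68: for p from B + 1 to B + n: reject unless M[p] \<le> M[p - 1] * k\<close>
    Add 1 6 5,
    JumpLeq 7 1 78,
    Load 3 1,
    Sub 4 1 5,
    Load 4 4,
    Mul 4 4 2,
    JumpLeq 3 4 76,
    Jump 80,
    Add 1 1 5,
    Jump 69,
    \<comment> \<open>78: accept (78) or reject (80): write the answer to cell 0 and halt\<close>
    LoadConst 0 1,
    Jump 81,
    LoadConst 0 0]"

lemma length_Prog: "length Prog = 81"
  by (simp add: Prog_def)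

lemma step_Prog: "step Prog (pc, m) = (if pc < 81 then exec (Prog ! pc) (pc, m) else (pc, m))"
  by (simp add: step_def halted_def length_Prog)

text \<open>Unfolding Prog only below nth lets the simplifier execute the program symbolically, one
  instruction at a time, while every other occurrence of Prog stays folded.\<close>

lemmas nth_Prog = arg_cong[where f = "\<lambda>P. P ! i" for i, OF Prog_def]

lemmas run_Prog = run_1 run_Suc run_numeral step_Prog nth_Prog

lemma halts_reject: "halts_with Prog (80, m) 1 False"
  by (simp add: halts_with_def halted_def length_Prog run_Prog)

lemma halts_accept: "halts_with Prog (78, m) 2 True"
  by (simp add: halts_with_def halted_def length_Prog run_Prog)

lemma setup_run:
  fixes m :: "int \<Rightarrow> int" and N K :: int
  assumes "m 0 = K" "m 1 = N" "1 \<le> K" "0 \<le> N"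
  defines "q \<equiv> - 2 * N - K"
  shows "\<exists>t m'. t \<le> 44 \<and> run Prog t (0, m) = (44, m')
    \<and> m' 0 = q \<and> m' 1 = 8 \<and> m' 2 = N + 2 \<and> m' 5 = 1 \<and> m' 6 = N + 8 \<and> m' 7 = 2 * N + 8
    \<and> m' (q - 7) = q - min N 6 \<and> m' (q - 8) = K
    \<and> (\<forall>j<6. m' (q - 1 - int j) = m (int j + 2)) \<and> (\<forall>a\<ge>8. m' a = m a)"
proof -
  define t where "t = (if 6 \<le> N then 43 else 44 :: nat)"
  have "\<exists>m'. run Prog t (0, m) = (44, m')
    \<and> m' 0 = q \<and> m' 1 = 8 \<and> m' 2 = N + 2 \<and> m' 5 = 1 \<and> m' 6 = N + 8 \<and> m' 7 = 2 * N + 8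
    \<and> m' (q - 7) = q - min N 6 \<and> m' (q - 8) = K
    \<and> m' (q - 1) = m 2 \<and> m' (q - 2) = m 3 \<and> m' (q - 3) = m 4
    \<and> m' (q - 4) = m 5 \<and> m' (q - 5) = m 6 \<and> m' (q - 6) = m 7 \<and> (\<forall>a\<ge>8. m' a = m a)"
    using assms(1-4) unfolding q_def t_def by (simp add: run_Prog)
  then obtain m' where m': "run Prog t (0, m) = (44, m')"
    "m' 0 = q" "m' 1 = 8" "m' 2 = N + 2" "m' 5 = 1" "m' 6 = N + 8" "m' 7 = 2 * N + 8"
    "m' (q - 7) = q - min N 6" "m' (q - 8) = K"
    "m' (q - 1) = m 2" "m' (q - 2) = m 3" "m' (q - 3) = m 4"
    "m' (q - 4) = m 5" "m' (q - 5) = m 6" "m' (q - 6) = m 7" "\<forall>a\<ge>8. m' a = m a"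
    by blast
  have "m' (q - 1 - int j) = m (int j + 2)" if "j < 6" for j
  proof -
    have "j = 0 \<or> j = 1 \<or> j = 2 \<or> j = 3 \<or> j = 4 \<or> j = 5"
      using that by auto
    then show ?thesis
      using m' by (elim disjE) (simp_all add: algebra_simps)
  qed
  moreover have "t \<le> 44"
    by (simp add: t_def)
  ultimately show ?thesis
    using m' by blast
qed

definition cells_hold :: "(int \<Rightarrow> int) \<Rightarrow> int \<Rightarrow> nat list \<Rightarrow> bool" where
  "cells_hold m p xs \<longleftrightarrow> (\<forall>i<length xs. m (p + int i) = int (xs ! i))"

lemma cells_hold_Cons [simp]: "cells_hold m p (x # xs) \<longleftrightarrow> m p = int x \<and> cells_hold m (p + 1) xs"
  by (auto simp: cells_hold_def less_Suc_eq_0_disj add.assoc)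

lemma cells_hold_cong:
  "\<forall>a\<in>{p..<p + int (length xs)}. m' a = m a \<Longrightarrow> cells_hold m' p xs \<longleftrightarrow> cells_hold m p xs"
  by (auto simp: cells_hold_def)

definition histogram_added :: "int \<Rightarrow> nat \<Rightarrow> nat list \<Rightarrow> (int \<Rightarrow> int) \<Rightarrow> (int \<Rightarrow> int) \<Rightarrow> bool" where
  "histogram_added b N xs m m' \<longleftrightarrow>
     (\<forall>a. a \<notin> {1, 3, 4} \<longrightarrow> (a < b \<or> b + int N \<le> a) \<longrightarrow> m' a = m a)
   \<and> (\<forall>d<N. m' (b + int d) = m (b + int d) + int (count (mset xs) d))"

lemma histogram_added_Cons:
  assumes "histogram_added b N xs (m(3 := u, 4 := v, b + int x := m (b + int x) + 1, 1 := w)) m'"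
    and "x < N" "8 \<le> b"
  shows "histogram_added b N (x # xs) m m'"
proof -
  have "b + int d \<notin> {1, 3, 4}" for d
    using assms(3) by auto
  then show ?thesis
    using assms(1,2) by (auto simp: histogram_added_def)
qed

lemma histogram_exit: "m 2 \<le> m 1 \<Longrightarrow> run Prog 1 (44, m) = (53, m)"
  by (simp add: run_Prog)

lemma histogram_step:
  assumes "m 1 = p" "m 2 = h" "p < h" "m p = int x" "x < N" "m 5 = 1" "m 6 = b" "m 7 = b + int N" "8 \<le> b"
  shows "run Prog 9 (44, m) = (44, m(3 := b + int x, 4 := m (b + int x) + 1, b + int x := m (b + int x) + 1, 1 := p + 1))"
  using assms by (simp add: run_Prog add.commute)

lemma histogram_reject:
  assumes "m 1 = p" "m 2 = h" "p < h" "m p = int x" "N \<le> x" "m 6 = b" "m 7 = b + int N"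
  shows "halts_with Prog (44, m) 5 False"
proof -
  have "run Prog 4 (44, m) = (80, m(3 := int x + b))"
    using assms by (simp add: run_Prog)
  then show ?thesis
    using halts_with_run[OF _ halts_reject] by fastforce
qed

lemma histogram_loop:
  fixes m :: "int \<Rightarrow> int"
  assumes "length xs = nat (h - p)"
    and "m 1 = p" "m 2 = h" "m 5 = 1" "m 6 = b" "m 7 = b + int N" "8 \<le> b"
    and "cells_hold m p xs" "\<forall>a\<in>{p..<h}. a \<notin> {1, 3, 4} \<and> (a < b \<or> b + int N \<le> a)"
  shows "((\<forall>x\<in>set xs. x < N) \<longrightarrow>
      (\<exists>t m'. t \<le> 9 * length xs + 1 \<and> run Prog t (44, m) = (53, m') \<and> histogram_added b N xs m m'))
    \<and> ((\<exists>x\<in>set xs. N \<le> x) \<longrightarrow> (\<exists>t \<le> 9 * length xs + 2. halts_with Prog (44, m) t False))"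
  using assms
proof (induction xs arbitrary: m p)
  case Nil
  then show ?case
    using histogram_exit[of m] by (intro conjI impI exI[of _ 1] exI[of _ m]) (auto simp: histogram_added_def)
next
  case (Cons x xs)
  have "p < h" "m p = int x"
    using Cons.prems(1,8) by auto
  define m1 where "m1 = m(3 := b + int x, 4 := m (b + int x) + 1, b + int x := m (b + int x) + 1, 1 := p + 1)"
  have step: "run Prog 9 (44, m) = (44, m1)" if "x < N"
    unfolding m1_def using Cons.prems \<open>p < h\<close> \<open>m p = int x\<close> that by (intro histogram_step) auto
  have IH: "((\<forall>x\<in>set xs. x < N) \<longrightarrow>
      (\<exists>t m'. t \<le> 9 * length xs + 1 \<and> run Prog t (44, m1) = (53, m') \<and> histogram_added b N xs m1 m'))
    \<and> ((\<exists>x\<in>set xs. N \<le> x) \<longrightarrow> (\<exists>t \<le> 9 * length xs + 2. halts_with Prog (44, m1) t False))"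
    if "x < N"
  proof (rule Cons.IH)
    show "length xs = nat (h - (p + 1))"
      using Cons.prems(1) by simp
    show "m1 1 = p + 1" "m1 2 = h" "m1 5 = 1" "m1 6 = b" "m1 7 = b + int N" "8 \<le> b"
      using Cons.prems(2-7) by (simp_all add: m1_def)
    show "\<forall>a\<in>{p + 1..<h}. a \<notin> {1, 3, 4} \<and> (a < b \<or> b + int N \<le> a)"
      using Cons.prems(9) by simp
    have "m1 a = m a" if "a \<in> {p + 1..<p + 1 + int (length xs)}" for a
    proof -
      have "h = p + 1 + int (length xs)"
        using Cons.prems(1) by (simp add: eq_commute[of "Suc _"] nat_eq_iff split: if_splits)
      then have "a \<in> {p..<h}"
        using that by simp
      then have "a \<notin> {1, 3, 4}" "a < b \<or> b + int N \<le> a"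
        using Cons.prems(9) by auto
      then have "a \<notin> {1, 3, 4}" "a \<noteq> b + int x"
        using \<open>x < N\<close> by auto
      then show ?thesis
        by (simp add: m1_def)
    qed
    then show "cells_hold m1 (p + 1) xs"
      using Cons.prems(8) cells_hold_cong[of "p + 1" xs m1 m] by simp
  qed
  show ?case
  proof (intro conjI impI)
    assume "\<forall>x\<in>set (x # xs). x < N"
    then obtain t m' where t: "t \<le> 9 * length xs + 1" "run Prog t (44, m1) = (53, m')"
      and added: "histogram_added b N xs m1 m'" and "x < N"
      using IH by auto
    have "run Prog (9 + t) (44, m) = (53, m')"
      using step[OF \<open>x < N\<close>] t(2) by (simp add: run_add)
    moreover have "histogram_added b N (x # xs) m m'"
      using histogram_added_Cons added \<open>x < N\<close> Cons.prems(7) unfolding m1_def by blast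
    ultimately show "\<exists>t m'. t \<le> 9 * length (x # xs) + 1 \<and> run Prog t (44, m) = (53, m')
      \<and> histogram_added b N (x # xs) m m'"
      using t(1) by (intro exI[of _ "9 + t"] exI[of _ m']) simp
  next
    assume too_large: "\<exists>x\<in>set (x # xs). N \<le> x"
    show "\<exists>t \<le> 9 * length (x # xs) + 2. halts_with Prog (44, m) t False"
    proof (cases "x < N")
      case False
      then show ?thesis
        using histogram_reject[OF Cons.prems(2,3) \<open>p < h\<close> \<open>m p = int x\<close> _ Cons.prems(5,6)]
        by (intro exI[of _ 5]) simp
    next
      case True
      then obtain t where "t \<le> 9 * length xs + 2" "halts_with Prog (44, m1) t False"
        using IH too_large by auto
      then show ?thesis
        using halts_with_run[OF step[OF True]] by (intro exI[of _ "9 + t"]) simp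
    qed
  qed
qed

lemma next_region_run:
  fixes m :: "int \<Rightarrow> int"
  assumes "m 0 = q" "q < 0" "m 2 = h" "2 \<le> h" "m 5 = 1"
  shows "\<exists>m'. run Prog 7 (53, m) = (44, m') \<and> m' 1 = m (q - 7) \<and> m' 2 = q
    \<and> (\<forall>a. a \<notin> {1, 2, 3} \<longrightarrow> m' a = m a)"
  using assms by (simp add: run_Prog)

lemma check_loop:
  fixes m :: "int \<Rightarrow> int" and c :: "nat \<Rightarrow> int"
  assumes "m 1 = b + int i" "m 2 = K" "m 5 = 1" "m 7 = b + int n" "8 \<le> b" "0 < i"
    and "\<forall>d<n. m (b + int d) = c d"
  shows "\<exists>t \<le> 9 * (n - i) + 3. halts_with Prog (69, m) t (\<forall>d\<in>{i..<n}. c d \<le> c (d - 1) * K)"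
  using assms
proof (induction "n - i" arbitrary: i m)
  case 0
  then have "run Prog 1 (69, m) = (78, m)"
    by (simp add: run_Prog)
  then have "halts_with Prog (69, m) (1 + 2) True"
    using halts_with_run halts_accept by blast
  then show ?case
    using 0 by (intro exI[of _ "1 + 2"]) simp
next
  case (Suc r)
  then have "i < n" by simp
  have reads: "m (b + int i) = c i" "m (b + int i - 1) = c (i - 1)"
    using Suc.prems(7) \<open>i < n\<close> Suc.prems(6) spec[OF Suc.prems(7), of "i - 1"] by (auto simp: of_nat_diff add_diff_eq)
  show ?case
  proof (cases "c i \<le> c (i - 1) * K")
    case True
    define m1 where "m1 = m(3 := c i, 4 := c (i - 1) * K, 1 := b + int i + 1)"
    have run8: "run Prog 8 (69, m) = (69, m1)"
      using Suc.prems \<open>i < n\<close> reads True by (simp add: run_Prog m1_def)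
    have "\<exists>t \<le> 9 * (n - Suc i) + 3. halts_with Prog (69, m1) t (\<forall>d\<in>{Suc i..<n}. c d \<le> c (d - 1) * K)"
      using Suc.hyps(1)[of "Suc i" m1] Suc.hyps(2) Suc.prems by (simp add: m1_def)
    then obtain t where t: "t \<le> 9 * (n - Suc i) + 3"
      and halts: "halts_with Prog (69, m1) t (\<forall>d\<in>{Suc i..<n}. c d \<le> c (d - 1) * K)"
      by blast
    have "{i..<n} = insert i {Suc i..<n}"
      using \<open>i < n\<close> by auto
    then have "halts_with Prog (69, m) (8 + t) (\<forall>d\<in>{i..<n}. c d \<le> c (d - 1) * K)"
      using halts_with_run[OF run8 halts] True by simp
    then show ?thesis
      using t \<open>i < n\<close> by (intro exI[of _ "8 + t"]) simp
  next
    case False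
    have "run Prog 7 (69, m) = (80, m(3 := c i, 4 := c (i - 1) * K))"
      using Suc.prems \<open>i < n\<close> reads False by (simp add: run_Prog)
    then have "halts_with Prog (69, m) (7 + 1) False"
      using halts_with_run halts_reject by blast
    then have "halts_with Prog (69, m) (7 + 1) (\<forall>d\<in>{i..<n}. c d \<le> c (d - 1) * K)"
      by (rule halts_with_False) (use False \<open>i < n\<close> in auto)
    then show ?thesis
      using \<open>i < n\<close> by (intro exI[of _ "7 + 1"]) simp
  qed
qed

lemma verify_run:
  fixes m :: "int \<Rightarrow> int" and c :: "nat \<Rightarrow> int"
  assumes "m 0 = q" "q < 0" "m 2 = q" "m 5 = 1" "m (q - 8) = K" "m 6 = b" "m 7 = b + int n" "8 \<le> b"
    and "\<forall>d\<le>n. m (b + int d) = c d"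
  shows "\<exists>t \<le> 9 * n + 12. halts_with Prog (53, m) t (c 0 = 1 \<and> (\<forall>d\<in>{1..<n}. c d \<le> c (d - 1) * K))"
proof (cases "c 0 = 1")
  case True
  have "\<exists>m'. run Prog 8 (53, m) = (69, m') \<and> m' 1 = b + 1 \<and> m' 2 = K \<and> m' 5 = 1
    \<and> m' 7 = b + int n \<and> (\<forall>a\<ge>8. m' a = m a)"
    using assms True spec[OF assms(9), of 0] by (simp add: run_Prog)
  then obtain m' where run8: "run Prog 8 (53, m) = (69, m')"
    and m': "m' 1 = b + int 1" "m' 2 = K" "m' 5 = 1" "m' 7 = b + int n" "\<forall>d<n. m' (b + int d) = c d"
    using assms(8,9) by auto
  obtain t where "t \<le> 9 * (n - 1) + 3"
    and "halts_with Prog (69, m') t (\<forall>d\<in>{1..<n}. c d \<le> c (d - 1) * K)"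
    using check_loop[OF m'(1,2,3,4) assms(8) _ m'(5)] by auto
  then show ?thesis
    using halts_with_run[OF run8] True by (intro exI[of _ "8 + t"]) auto
next
  case False
  have "\<exists>t\<le>8. \<exists>m'. run Prog t (53, m) = (80, m')"
  proof (cases "c 0 < 1")
    case True
    then show ?thesis
      using assms spec[OF assms(9), of 0] by (intro exI[of _ 8]) (simp add: run_Prog)
  next
    case False
    then show ?thesis
      using assms \<open>c 0 \<noteq> 1\<close> spec[OF assms(9), of 0] by (intro exI[of _ 7]) (simp add: run_Prog)
  qed
  then obtain t m' where "t \<le> 8" "run Prog t (53, m) = (80, m')"
    by blast
  then have "halts_with Prog (53, m) (t + 1) False"
    using halts_with_run halts_reject by blast
  then show ?thesis
    using False \<open>t \<le> 8\<close> by (intro exI[of _ "t + 1"]) simp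
qed

locale depth_input =
  fixes k :: nat and ds :: "nat list"
  assumes k_pos: "1 \<le> k"
begin

definition saved_base :: int where
  "saved_base = - 2 * int (length ds) - int k"

definition saved_start :: int where
  "saved_start = saved_base - int (length (take 6 ds))"

definition count_base :: int where
  "count_base = int (length ds) + 8"

text \<open>saved_base and count_base are the addresses q and B of the comments in Prog. The setup
  saves input cell j + 2 at saved_base - 1 - j, so the first six depths appear in reverse order
  from saved_start on. The counter for depth n is never incremented; keeping it in the layout lets
  the test of the root counter also cover the empty input.\<close>

definition layout :: "(nat \<Rightarrow> int) \<Rightarrow> (int \<Rightarrow> int) \<Rightarrow> bool" where
  "layout c m \<longleftrightarrow>
     m 0 = saved_base \<and> m 5 = 1 \<and> m 6 = count_base \<and> m 7 = count_base + int (length ds)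
   \<and> m (saved_base - 7) = saved_start \<and> m (saved_base - 8) = int k
   \<and> cells_hold m saved_start (rev (take 6 ds)) \<and> cells_hold m 8 (drop 6 ds)
   \<and> (\<forall>d\<le>length ds. m (count_base + int d) = c d)"

lemma saved_base_neg: "saved_base < 0"
  using k_pos by (simp add: saved_base_def)

lemma layout_frame:
  assumes "layout c m"
    and frame: "\<forall>a. a \<notin> {1, 2, 3, 4} \<longrightarrow> (a < count_base \<or> count_base + int (length ds) \<le> a) \<longrightarrow> m' a = m a"
    and "\<forall>d\<le>length ds. m' (count_base + int d) = c' d"
  shows "layout c' m'"
proof -
  have unchanged: "m' a = m a" if "a < 0 \<or> a \<in> {0, 5, 6, 7} \<or> (8 \<le> a \<and> a < int (length ds) + 2)" for a
  proof -
    have "a \<notin> {1, 2, 3, 4}" "a < count_base"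
      using that by (auto simp: count_base_def)
    then show ?thesis
      using frame by blast
  qed
  have "\<forall>a\<in>{saved_start..<saved_start + int (length (rev (take 6 ds)))}. m' a = m a"
    using saved_base_neg by (intro ballI unchanged) (simp add: saved_start_def)
  then have saved: "cells_hold m' saved_start (rev (take 6 ds)) \<longleftrightarrow> cells_hold m saved_start (rev (take 6 ds))"
    by (rule cells_hold_cong)
  have "\<forall>a\<in>{8..<8 + int (length (drop 6 ds))}. m' a = m a"
    by (intro ballI unchanged) auto
  then have input: "cells_hold m' 8 (drop 6 ds) \<longleftrightarrow> cells_hold m 8 (drop 6 ds)"
    by (rule cells_hold_cong)
  have "m' a = m a" if "a \<in> {0, 5, 6, 7, saved_base - 7, saved_base - 8}" for a
    using that saved_base_neg by (intro unchanged) auto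
  then show ?thesis
    using assms(1,3) saved input by (simp add: layout_def)
qed

lemma layout_histogram_added:
  assumes "layout c m" "\<forall>x\<in>set xs. x < length ds" "histogram_added count_base (length ds) xs m m'"
  shows "layout (\<lambda>d. c d + int (count (mset xs) d)) m'"
proof (rule layout_frame[OF assms(1)])
  show frame: "\<forall>a. a \<notin> {1, 2, 3, 4} \<longrightarrow> (a < count_base \<or> count_base + int (length ds) \<le> a) \<longrightarrow> m' a = m a"
    using assms(3) by (auto simp: histogram_added_def)
  show "\<forall>d\<le>length ds. m' (count_base + int d) = c d + int (count (mset xs) d)"
  proof (intro allI impI)
    fix d
    assume "d \<le> length ds"
    then consider "d < length ds" | "d = length ds"
      by linarith
    then show "m' (count_base + int d) = c d + int (count (mset xs) d)"
    proof cases
      case 1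
      then show ?thesis
        using assms(1,3) by (simp add: layout_def histogram_added_def)
    next
      case 2
      have "m' (count_base + int d) = m (count_base + int d)"
        using frame[rule_format, of "count_base + int d"] 2 by (simp add: count_base_def)
      moreover have "count (mset xs) d = 0"
        using assms(2) 2 by auto
      ultimately show ?thesis
        using assms(1) 2 by (simp add: layout_def)
    qed
  qed
qed

lemma setup_layout:
  "\<exists>t m. t \<le> 44 \<and> run Prog t (init k ds) = (44, m) \<and> layout (\<lambda>_. 0) m \<and> m 1 = 8 \<and> m 2 = int (length ds) + 2"
proof -
  define m0 where "m0 = snd (init k ds)"
  have init: "init k ds = (0, m0)"
    by (simp add: m0_def init_def)
  have m0_input: "m0 (int j + 2) = int (ds ! j)" if "j < length ds" for j
    using that by (simp add: m0_def init_def)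
  have m0_zero: "m0 a = 0" if "int (length ds) + 2 \<le> a" for a
    using that by (simp add: m0_def init_def)
  obtain t m where t: "t \<le> 44" "run Prog t (0, m0) = (44, m)"
    and m: "m 0 = saved_base" "m 1 = 8" "m 2 = int (length ds) + 2" "m 5 = 1" "m 6 = count_base"
      "m 7 = count_base + int (length ds)" "m (saved_base - 7) = saved_base - min (int (length ds)) 6"
      "m (saved_base - 8) = int k"
    and saved: "\<forall>j<6. m (saved_base - 1 - int j) = m0 (int j + 2)"
    and rest: "\<forall>a\<ge>8. m a = m0 a"
    using setup_run[of m0 "int k" "int (length ds)"] k_pos
    by (auto simp: m0_def init_def saved_base_def count_base_def)
  have "cells_hold m saved_start (rev (take 6 ds))"
    unfolding cells_hold_def
  proof (intro allI impI)
    fix i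
    assume i: "i < length (rev (take 6 ds))"
    define j where "j = length (take 6 ds) - Suc i"
    have "j < 6" "j < length ds"
      using i by (auto simp: j_def)
    have addr: "saved_start + int i = saved_base - 1 - int j"
      using i by (simp add: saved_start_def j_def of_nat_diff)
    have "m (saved_start + int i) = m0 (int j + 2)"
      unfolding addr using saved \<open>j < 6\<close> by blast
    also have "\<dots> = int (rev (take 6 ds) ! i)"
      using m0_input[OF \<open>j < length ds\<close>] i \<open>j < 6\<close> by (simp add: rev_nth j_def)
    finally show "m (saved_start + int i) = int (rev (take 6 ds) ! i)" .
  qed
  moreover have "cells_hold m 8 (drop 6 ds)"
    unfolding cells_hold_def
  proof (intro allI impI)
    fix i
    assume "i < length (drop 6 ds)"
    then show "m (8 + int i) = int (drop 6 ds ! i)"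
      using rest m0_input[of "i + 6"] by (simp add: algebra_simps)
  qed
  moreover have "m (count_base + int d) = 0" for d
    using rest m0_zero by (simp add: count_base_def)
  ultimately have "layout (\<lambda>_. 0) m"
    using m by (simp add: layout_def saved_start_def min_def)
  then show ?thesis
    using t m init by auto
qed

lemma histogram_pass:
  assumes "layout c m" "m 1 = p" "m 2 = h" "length xs = nat (h - p)" "cells_hold m p xs"
    and region: "\<forall>a\<in>{p..<h}. a < 0 \<or> (8 \<le> a \<and> a < int (length ds) + 2)"
  shows "((\<forall>x\<in>set xs. x < length ds) \<longrightarrow> (\<exists>t m'. t \<le> 9 * length xs + 1 \<and> run Prog t (44, m) = (53, m')
      \<and> layout (\<lambda>d. c d + int (count (mset xs) d)) m' \<and> m' 2 = h))
    \<and> ((\<exists>x\<in>set xs. length ds \<le> x) \<longrightarrow> (\<exists>t \<le> 9 * length xs + 2. halts_with Prog (44, m) t False))"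
proof -
  have loop: "((\<forall>x\<in>set xs. x < length ds) \<longrightarrow> (\<exists>t m'. t \<le> 9 * length xs + 1 \<and> run Prog t (44, m) = (53, m')
      \<and> histogram_added count_base (length ds) xs m m'))
    \<and> ((\<exists>x\<in>set xs. length ds \<le> x) \<longrightarrow> (\<exists>t \<le> 9 * length xs + 2. halts_with Prog (44, m) t False))"
  proof (rule histogram_loop)
    show "m 5 = 1" "m 6 = count_base" "m 7 = count_base + int (length ds)" "8 \<le> count_base"
      using assms(1) by (simp_all add: layout_def count_base_def)
    show "\<forall>a\<in>{p..<h}. a \<notin> {1, 3, 4} \<and> (a < count_base \<or> count_base + int (length ds) \<le> a)"
      using region by (fastforce simp: count_base_def)
  qed (use assms in simp_all)
  have "m' 2 = h" if "histogram_added count_base (length ds) xs m m'" for m'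
    using that assms(3) by (simp add: histogram_added_def count_base_def)
  then show ?thesis
    using loop layout_histogram_added[OF assms(1)] by blast
qed

definition kary_counts :: "(nat \<Rightarrow> int) \<Rightarrow> bool" where
  "kary_counts c \<longleftrightarrow> c 0 = 1 \<and> (\<forall>d\<in>{1..<length ds}. c d \<le> int k * c (d - 1))"

lemma verify_phase:
  assumes "layout c m" "m 2 = saved_base"
  shows "\<exists>t \<le> 9 * length ds + 12. halts_with Prog (53, m) t (kary_counts c)"
proof -
  have "m 0 = saved_base" "m 5 = 1" "m (saved_base - 8) = int k" "m 6 = count_base"
    "m 7 = count_base + int (length ds)" "8 \<le> count_base" "\<forall>d\<le>length ds. m (count_base + int d) = c d"
    using assms(1) by (simp_all add: layout_def count_base_def)
  then show ?thesis
    unfolding kary_counts_def mult.commute[of "int k"]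
    using verify_run assms(2) saved_base_neg by blast
qed

lemma saved_phase:
  assumes "layout c m" "m 1 = saved_start" "m 2 = saved_base"
  shows "\<exists>t \<le> 9 * length ds + 67. halts_with Prog (44, m) t
    ((\<forall>x\<in>set (take 6 ds). x < length ds) \<and> kary_counts (\<lambda>d. c d + int (count (mset (take 6 ds)) d)))"
proof -
  have pass: "((\<forall>x\<in>set (rev (take 6 ds)). x < length ds) \<longrightarrow> (\<exists>t m'. t \<le> 9 * length (rev (take 6 ds)) + 1
      \<and> run Prog t (44, m) = (53, m') \<and> layout (\<lambda>d. c d + int (count (mset (rev (take 6 ds))) d)) m' \<and> m' 2 = saved_base))
    \<and> ((\<exists>x\<in>set (rev (take 6 ds)). length ds \<le> x)
      \<longrightarrow> (\<exists>t \<le> 9 * length (rev (take 6 ds)) + 2. halts_with Prog (44, m) t False))"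
  proof (rule histogram_pass[OF assms])
    show "length (rev (take 6 ds)) = nat (saved_base - saved_start)"
      by (simp add: saved_start_def)
    show "cells_hold m saved_start (rev (take 6 ds))"
      using assms(1) by (simp add: layout_def)
    show "\<forall>a\<in>{saved_start..<saved_base}. a < 0 \<or> (8 \<le> a \<and> a < int (length ds) + 2)"
      using saved_base_neg by simp
  qed
  show ?thesis
  proof (cases "\<forall>x\<in>set (take 6 ds). x < length ds")
    case True
    then have "\<forall>x\<in>set (rev (take 6 ds)). x < length ds"
      by simp
    then obtain t m' where t: "t \<le> 9 * length (rev (take 6 ds)) + 1" "run Prog t (44, m) = (53, m')"
      and layout': "layout (\<lambda>d. c d + int (count (mset (rev (take 6 ds))) d)) m'" and "m' 2 = saved_base"
      using pass by blast
    obtain s where s: "s \<le> 9 * length ds + 12"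
      and halts: "halts_with Prog (53, m') s (kary_counts (\<lambda>d. c d + int (count (mset (take 6 ds)) d)))"
      using verify_phase[of _ m'] \<open>m' 2 = saved_base\<close> layout' by auto
    have "halts_with Prog (44, m) (t + s)
      ((\<forall>x\<in>set (take 6 ds). x < length ds) \<and> kary_counts (\<lambda>d. c d + int (count (mset (take 6 ds)) d)))"
      using halts_with_run[OF t(2) halts] True by simp
    moreover have "t + s \<le> 9 * length ds + 67"
      using t(1) s by simp
    ultimately show ?thesis
      by blast
  next
    case False
    then have "\<exists>x\<in>set (rev (take 6 ds)). length ds \<le> x"
      by (auto simp: not_less)
    then obtain t where "t \<le> 9 * length (rev (take 6 ds)) + 2" "halts_with Prog (44, m) t False"
      using pass by blast
    have "halts_with Prog (44, m) t
      ((\<forall>x\<in>set (take 6 ds). x < length ds) \<and> kary_counts (\<lambda>d. c d + int (count (mset (take 6 ds)) d)))"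
      using \<open>halts_with Prog (44, m) t False\<close> by (rule halts_with_False) (use False in simp)
    moreover have "t \<le> 9 * length ds + 67"
      using \<open>t \<le> 9 * length (rev (take 6 ds)) + 2\<close> by simp
    ultimately show ?thesis
      by blast
  qed
qed

lemma input_phase:
  assumes "layout c m" "m 1 = 8" "m 2 = int (length ds) + 2"
  shows "\<exists>t \<le> 18 * length ds + 76. halts_with Prog (44, m) t
    ((\<forall>x\<in>set ds. x < length ds) \<and> kary_counts (\<lambda>d. c d + int (count (mset ds) d)))"
proof -
  have pass: "((\<forall>x\<in>set (drop 6 ds). x < length ds) \<longrightarrow> (\<exists>t m'. t \<le> 9 * length (drop 6 ds) + 1
      \<and> run Prog t (44, m) = (53, m') \<and> layout (\<lambda>d. c d + int (count (mset (drop 6 ds)) d)) m'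
      \<and> m' 2 = int (length ds) + 2))
    \<and> ((\<exists>x\<in>set (drop 6 ds). length ds \<le> x)
      \<longrightarrow> (\<exists>t \<le> 9 * length (drop 6 ds) + 2. halts_with Prog (44, m) t False))"
    using assms by (intro histogram_pass) (auto simp: layout_def)
  show ?thesis
  proof (cases "\<forall>x\<in>set (drop 6 ds). x < length ds")
    case True
    define c' where "c' = (\<lambda>d. c d + int (count (mset (drop 6 ds)) d))"
    obtain t m1 where t: "t \<le> 9 * length (drop 6 ds) + 1" "run Prog t (44, m) = (53, m1)"
      and layout1: "layout c' m1" and "m1 2 = int (length ds) + 2"
      using pass True unfolding c'_def by blast
    obtain m2 where run7: "run Prog 7 (53, m1) = (44, m2)"
      and m2: "m2 1 = m1 (saved_base - 7)" "m2 2 = saved_base" "\<forall>a. a \<notin> {1, 2, 3} \<longrightarrow> m2 a = m1 a"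
      using next_region_run[of m1 saved_base] layout1 \<open>m1 2 = int (length ds) + 2\<close> saved_base_neg
      by (auto simp: layout_def)
    have "layout c' m2"
    proof (rule layout_frame[OF layout1])
      show "\<forall>a. a \<notin> {1, 2, 3, 4} \<longrightarrow> (a < count_base \<or> count_base + int (length ds) \<le> a) \<longrightarrow> m2 a = m1 a"
        using m2(3) by simp
      have "m2 (count_base + int d) = m1 (count_base + int d)" for d
        using m2(3) by (simp add: count_base_def)
      then show "\<forall>d\<le>length ds. m2 (count_base + int d) = c' d"
        using layout1 by (simp add: layout_def)
    qed
    moreover have "m2 1 = saved_start"
      using m2(1) layout1 by (simp add: layout_def)
    ultimately obtain s where s: "s \<le> 9 * length ds + 67" and halts: "halts_with Prog (44, m2) s
        ((\<forall>x\<in>set (take 6 ds). x < length ds) \<and> kary_counts (\<lambda>d. c' d + int (count (mset (take 6 ds)) d)))"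
      using saved_phase m2(2) by blast
    have "mset ds = mset (take 6 ds) + mset (drop 6 ds)" "set ds = set (take 6 ds) \<union> set (drop 6 ds)"
      by (metis append_take_drop_id mset_append, metis append_take_drop_id set_append)
    then have "((\<forall>x\<in>set (take 6 ds). x < length ds) \<and> kary_counts (\<lambda>d. c' d + int (count (mset (take 6 ds)) d)))
      \<longleftrightarrow> (\<forall>x\<in>set ds. x < length ds) \<and> kary_counts (\<lambda>d. c d + int (count (mset ds) d))"
      using True by (auto simp: c'_def algebra_simps)
    then show ?thesis
      using halts_with_run[OF t(2) halts_with_run[OF run7 halts]] t(1) s
      by (intro exI[of _ "t + (7 + s)"]) simp
  next
    case False
    then have "\<exists>x\<in>set (drop 6 ds). length ds \<le> x"
      by (auto simp: not_less)
    then obtain t where "t \<le> 9 * length (drop 6 ds) + 2" "halts_with Prog (44, m) t False"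
      using pass by blast
    have "halts_with Prog (44, m) t
      ((\<forall>x\<in>set ds. x < length ds) \<and> kary_counts (\<lambda>d. c d + int (count (mset ds) d)))"
      using \<open>halts_with Prog (44, m) t False\<close>
      by (rule halts_with_False) (use False in \<open>auto dest: in_set_dropD\<close>)
    moreover have "t \<le> 18 * length ds + 76"
      using \<open>t \<le> 9 * length (drop 6 ds) + 2\<close> by simp
    ultimately show ?thesis
      by blast
  qed
qed

theorem Prog_decides:
  "\<exists>t \<le> 18 * length ds + 120. halts_with Prog (init k ds) t (\<exists>T. kary k T \<and> depths T = mset ds)"
proof -
  obtain t m where t: "t \<le> 44" "run Prog t (init k ds) = (44, m)"
    and m: "layout (\<lambda>_. 0) m" "m 1 = 8" "m 2 = int (length ds) + 2"
    using setup_layout by blast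
  obtain s where s: "s \<le> 18 * length ds + 76" and halts: "halts_with Prog (44, m) s
      ((\<forall>x\<in>set ds. x < length ds) \<and> kary_counts (\<lambda>d. int (count (mset ds) d)))"
    using input_phase[OF m] by auto
  have "((\<forall>x\<in>set ds. x < length ds) \<and> kary_counts (\<lambda>d. int (count (mset ds) d)))
    \<longleftrightarrow> (\<exists>T. kary k T \<and> depths T = mset ds)"
    unfolding kary_tree_depths_iff_bounded kary_counts_def
    by (simp flip: of_nat_mult)
  then show ?thesis
    using halts_with_run[OF t(2) halts] t(1) s by (intro exI[of _ "t + s"]) simp
qed

end

theorem mainTheorem8:
  shows "\<exists>(P :: instr list) (c :: real). \<forall>(k :: nat) (ds :: nat list). k \<ge> 1 \<longrightarrow>
     (\<exists>t. real t \<le> c * (real (length ds) + 1) * log 2 (real (length ds) + 2)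
          \<and> halted P (run P t (init k ds))
          \<and> snd (run P t (init k ds)) 0 \<in> {0, 1}
          \<and> (snd (run P t (init k ds)) 0 = 1 \<longleftrightarrow>
               (\<exists>T. kary k T \<and> depths T = mset ds)))"
proof -
  have "\<exists>t. real t \<le> 120 * (real (length ds) + 1) * log 2 (real (length ds) + 2)
          \<and> halted Prog (run Prog t (init k ds))
          \<and> snd (run Prog t (init k ds)) 0 \<in> {0, 1}
          \<and> (snd (run Prog t (init k ds)) 0 = 1 \<longleftrightarrow> (\<exists>T. kary k T \<and> depths T = mset ds))"
    if "1 \<le> k" for k ds
  proof -
    interpret depth_input k ds
      using that by unfold_locales
    obtain t where t: "t \<le> 18 * length ds + 120"
      and halts: "halts_with Prog (init k ds) t (\<exists>T. kary k T \<and> depths T = mset ds)"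
      using Prog_decides by blast
    have "real t \<le> real (18 * length ds + 120)"
      using t by (simp only: of_nat_le_iff)
    also have "\<dots> \<le> 120 * (real (length ds) + 1)"
      by simp
    also have "\<dots> \<le> 120 * (real (length ds) + 1) * log 2 (real (length ds) + 2)"
      by (simp add: mult_le_cancel_left1)
    finally show ?thesis
      using halts by (intro exI[of _ t]) (auto simp: halts_with_def)
  qed
  then show ?thesis
    by blast
qed

end
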